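(* Let $\rho$ be any single-qubit density matrix and let $\Lambda$ be any incoherent operation (IO) on a qubit. Then there exists a strictly incoherent operation (SIO) $\Lambda'$ on a qubit with $\Lambda'(\rho)=\Lambda(\rho)$. Consequently, for every single-qubit state $\rho$, the set $\{\Lambda(\rho):\Lambda \text{ an IO}\}$ equals the set $\{\Lambda(\rho):\Lambda\text{ an SIO}\}$.
   Context: Fix the computational (incoherent) basis $\{|0\rangle,|1\rangle\}$ of $\mathbb{C}^2$; a state is incoherent if it is diagonal in this basis. An incoherent operation (IO) is a quantum channel with Kraus operators $\{K_n\}$, $\sum_n K_n^\dagger K_n=I$, such that $K_n\delta K_n^\dagger$ is diagonal for every diagonal $\delta$ (equivalently, each $K_n$ has at most one nonzero entry in every column). A strictly incoherent operation (SIO) is an IO whose Kraus operators additionally satisfy that $K_n^\dagger\delta K_n$ is diagonal for every diagonal $\delta$ (equivalently, each $K_n$ has at most one nonzero entry in every row and every column). *)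

theory Defs
  imports "HOL-Analysis.Analysis"
begin

text \<open>Qubit operators: 2x2 complex matrices indexed by the two-element type 2,
  with index 1 playing the role of ket 0 and index 2 the role of ket 1.\<close>
type_synonym qmat = "complex ^ 2 ^ 2"

definition adjoint :: "qmat \<Rightarrow> qmat" where
  "adjoint A = (\<chi> i j. cnj (A $ j $ i))"

definition is_diagonal :: "qmat \<Rightarrow> bool" where
  "is_diagonal A \<longleftrightarrow> (\<forall>i j. i \<noteq> j \<longrightarrow> A $ i $ j = 0)"

definition qtrace :: "qmat \<Rightarrow> complex" where
  "qtrace A = (\<Sum>i\<in>UNIV. A $ i $ i)"

definition psd :: "qmat \<Rightarrow> bool" where
  "psd A \<longleftrightarrow> (\<forall>v :: complex ^ 2.
     (\<Sum>i\<in>UNIV. \<Sum>j\<in>UNIV. cnj (v $ i) * A $ i $ j * v $ j) \<in> \<real> \<and>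
     Re (\<Sum>i\<in>UNIV. \<Sum>j\<in>UNIV. cnj (v $ i) * A $ i $ j * v $ j) \<ge> 0)"

definition density_matrix :: "qmat \<Rightarrow> bool" where
  "density_matrix \<rho> \<longleftrightarrow> adjoint \<rho> = \<rho> \<and> psd \<rho> \<and> qtrace \<rho> = 1"

definition kraus_complete :: "qmat list \<Rightarrow> bool" where
  "kraus_complete Ks \<longleftrightarrow> (\<Sum>K\<leftarrow>Ks. adjoint K ** K) = mat 1"

definition apply_kraus :: "qmat list \<Rightarrow> qmat \<Rightarrow> qmat" where
  "apply_kraus Ks \<rho> = (\<Sum>K\<leftarrow>Ks. K ** \<rho> ** adjoint K)"

definition incoherent_op :: "qmat list \<Rightarrow> bool" where
  "incoherent_op Ks \<longleftrightarrow> kraus_complete Ks \<and>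
     (\<forall>K\<in>set Ks. \<forall>\<delta>. is_diagonal \<delta> \<longrightarrow> is_diagonal (K ** \<delta> ** adjoint K))"

definition strictly_incoherent_op :: "qmat list \<Rightarrow> bool" where
  "strictly_incoherent_op Ks \<longleftrightarrow> incoherent_op Ks \<and>
     (\<forall>K\<in>set Ks. \<forall>\<delta>. is_diagonal \<delta> \<longrightarrow> is_diagonal (adjoint K ** \<delta> ** K))"

end

theory Submission
  imports Defs
begin

text \<open>A qubit Kraus operator is incoherent iff each column has at most one nonzero entry.
  If such an operator is not strictly incoherent, one of its rows vanishes, so it maps every
  state to a diagonal one. Hence the non-strict Kraus operators of an IO together produce a
  diagonal state \<open>D\<close>, their Gram sum \<open>M\<close> is diagonal (because the rest of the Gram sum is),
  and trace duality gives \<open>tr D = tr (M \<rho>)\<close>. Such a pair is realised by a measure-and-prepare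
  channel whose Kraus operators are scaled matrix units, hence strictly incoherent.\<close>

lemma matrix_mult_qmat_entry: "((A::qmat) ** (B::qmat)) $ i $ j = A$i$1 * B$1$j + A$i$2 * B$2$j"
  by (simp add: matrix_matrix_mult_def sum_2)

lemma adjoint_entry [simp]: "adjoint A $ i $ j = cnj (A $ j $ i)"
  by (simp add: adjoint_def)

lemma adjoint_adjoint [simp]: "adjoint (adjoint A) = A"
  by (simp add: vec_eq_iff)

lemma is_diagonal_iff: "is_diagonal A \<longleftrightarrow> A$1$2 = 0 \<and> A$2$1 = 0"
  unfolding is_diagonal_def forall_2 by auto

lemma qmat_eq_iff:
  "(A::qmat) = B \<longleftrightarrow> A$1$1 = B$1$1 \<and> A$1$2 = B$1$2 \<and> A$2$1 = B$2$1 \<and> A$2$2 = B$2$2"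
  by (simp add: vec_eq_iff forall_2)

lemma sum_list_qmat_entry: "(\<Sum>x\<leftarrow>xs. (f x :: qmat)) $ i $ j = (\<Sum>x\<leftarrow>xs. f x $ i $ j)"
  by (induction xs) auto

lemma sum_list_map_filter_partition:
  "(\<Sum>x\<leftarrow>xs. f x) = (\<Sum>x\<leftarrow>filter P xs. f x) + (\<Sum>x\<leftarrow>filter (\<lambda>x. \<not> P x) xs. (f x :: 'a::comm_monoid_add))"
  by (induction xs) (simp_all add: add_ac)

lemma is_diagonal_sum_list:
  "(\<And>x. x \<in> set xs \<Longrightarrow> is_diagonal (f x)) \<Longrightarrow> is_diagonal (\<Sum>x\<leftarrow>xs. f x)"
  by (induction xs) (simp_all add: is_diagonal_iff)

definition matrix_unit :: "2 \<Rightarrow> 2 \<Rightarrow> complex \<Rightarrow> qmat" where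
  "matrix_unit i j s = (\<chi> a b. if a = i \<and> b = j then s else 0)"

lemma matrix_unit_entry [simp]: "matrix_unit i j s $ a $ b = (if a = i \<and> b = j then s else 0)"
  by (simp add: matrix_unit_def)

lemma psd_sandwich:
  assumes "psd A"
  shows "psd (K ** A ** adjoint K)"
  unfolding psd_def
proof
  fix v :: "complex ^ 2"
  define w :: "complex ^ 2" where "w = (\<chi> j. \<Sum>i\<in>UNIV. cnj (K$i$j) * v$i)"
  have "(\<Sum>i\<in>UNIV. \<Sum>j\<in>UNIV. cnj (v$i) * (K ** A ** adjoint K)$i$j * v$j)
      = (\<Sum>i\<in>UNIV. \<Sum>j\<in>UNIV. cnj (w$i) * A$i$j * w$j)"
    by (simp add: w_def sum_2 matrix_mult_qmat_entry algebra_simps)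
  then show "(\<Sum>i\<in>UNIV. \<Sum>j\<in>UNIV. cnj (v$i) * (K ** A ** adjoint K)$i$j * v$j) \<in> \<real> \<and>
      0 \<le> Re (\<Sum>i\<in>UNIV. \<Sum>j\<in>UNIV. cnj (v$i) * (K ** A ** adjoint K)$i$j * v$j)"
    using assms unfolding psd_def by presburger
qed

lemma psd_zero: "psd 0"
  by (simp add: psd_def)

lemma psd_add: "psd A \<Longrightarrow> psd B \<Longrightarrow> psd (A + B)"
  by (simp add: psd_def distrib_left distrib_right sum.distrib)

lemma psd_sum_list: "(\<And>x. x \<in> set xs \<Longrightarrow> psd (f x)) \<Longrightarrow> psd (\<Sum>x\<leftarrow>xs. f x)"
  by (induction xs) (simp_all add: psd_zero psd_add)

lemma psd_apply_kraus: "psd \<rho> \<Longrightarrow> psd (apply_kraus Ks \<rho>)"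
  unfolding apply_kraus_def by (intro psd_sum_list psd_sandwich)

lemma psd_identity: "psd (mat 1)"
  by (simp add: psd_def sum_2 mat_def mult.commute flip: complex_norm_square)

lemma psd_gram: "psd (\<Sum>K\<leftarrow>Ks. adjoint K ** K)"
  using psd_sandwich[OF psd_identity, of "adjoint K" for K]
  by (intro psd_sum_list) simp

lemma psd_diagonal_entry:
  assumes "psd A"
  shows "A $ i $ i = of_real (Re (A $ i $ i)) \<and> 0 \<le> Re (A $ i $ i)"
proof -
  have "(\<Sum>a\<in>UNIV. \<Sum>b\<in>UNIV. cnj (axis i 1 $ a) * A$a$b * axis i 1 $ b) = A $ i $ i"
    unfolding sum_2 using exhaust_2[of i] by (auto simp: axis_def)
  with assms[unfolded psd_def, rule_format, of "axis i 1"]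
  have "A $ i $ i \<in> \<real>" "0 \<le> Re (A $ i $ i)"
    by simp_all
  then show ?thesis
    by (simp add: complex_is_Real_iff complex_eq_iff)
qed

lemma qtrace_sandwich: "qtrace (K ** A ** adjoint K) = qtrace (adjoint K ** K ** A)"
  by (simp add: qtrace_def sum_2 matrix_mult_qmat_entry algebra_simps)

lemma qtrace_sum_list_mult:
  "qtrace ((\<Sum>x\<leftarrow>xs. f x) ** (A::qmat)) = (\<Sum>x\<leftarrow>xs. qtrace (f x ** A))"
  by (simp add: qtrace_def sum_2 matrix_mult_qmat_entry sum_list_qmat_entry sum_list_addf
      flip: sum_list_mult_const)

lemma qtrace_apply_kraus:
  "qtrace (apply_kraus Ks \<rho>) = qtrace ((\<Sum>K\<leftarrow>Ks. adjoint K ** K) ** \<rho>)"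
proof -
  have "qtrace (apply_kraus Ks \<rho>) = (\<Sum>K\<leftarrow>Ks. qtrace (K ** \<rho> ** adjoint K))"
    by (simp add: apply_kraus_def qtrace_def sum_2 sum_list_qmat_entry sum_list_addf)
  then show ?thesis
    by (simp add: qtrace_sandwich qtrace_sum_list_mult)
qed

definition incoherent_kraus :: "qmat \<Rightarrow> bool" where
  "incoherent_kraus K \<longleftrightarrow> (\<forall>\<delta>. is_diagonal \<delta> \<longrightarrow> is_diagonal (K ** \<delta> ** adjoint K))"

definition strictly_incoherent_kraus :: "qmat \<Rightarrow> bool" where
  "strictly_incoherent_kraus K \<longleftrightarrow> incoherent_kraus K \<and> incoherent_kraus (adjoint K)"

lemma incoherent_op_iff:
  "incoherent_op Ks \<longleftrightarrow> kraus_complete Ks \<and> (\<forall>K\<in>set Ks. incoherent_kraus K)"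
  by (simp add: incoherent_op_def incoherent_kraus_def)

lemma strictly_incoherent_op_iff:
  "strictly_incoherent_op Ks \<longleftrightarrow> kraus_complete Ks \<and> (\<forall>K\<in>set Ks. strictly_incoherent_kraus K)"
  unfolding strictly_incoherent_op_def incoherent_op_iff strictly_incoherent_kraus_def
    incoherent_kraus_def adjoint_adjoint by blast

lemma incoherent_kraus_iff_columns:
  "incoherent_kraus K \<longleftrightarrow> (K$1$1 = 0 \<or> K$2$1 = 0) \<and> (K$1$2 = 0 \<or> K$2$2 = 0)"
proof
  assume "incoherent_kraus K"
  moreover have "is_diagonal (matrix_unit j j 1)" for j
    by (simp add: is_diagonal_iff)
  ultimately have "is_diagonal (K ** matrix_unit j j 1 ** adjoint K)" for j
    by (simp add: incoherent_kraus_def)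
  from this[of 1] this[of 2]
  show "(K$1$1 = 0 \<or> K$2$1 = 0) \<and> (K$1$2 = 0 \<or> K$2$2 = 0)"
    by (simp add: is_diagonal_iff matrix_mult_qmat_entry)
qed (auto simp: incoherent_kraus_def is_diagonal_iff matrix_mult_qmat_entry)

lemma not_strictly_incoherent_kraus_zero_row:
  assumes "incoherent_kraus K" and "\<not> strictly_incoherent_kraus K"
  obtains i where "K$i$1 = 0" and "K$i$2 = 0"
  using assms unfolding strictly_incoherent_kraus_def incoherent_kraus_iff_columns
  by auto

lemma zero_row_sandwich_diagonal:
  assumes "K$i$1 = 0" and "K$i$2 = 0"
  shows "is_diagonal (K ** A ** adjoint K)"
  using assms exhaust_2[of i] by (elim disjE) (simp_all add: is_diagonal_iff matrix_mult_qmat_entry)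

lemma strictly_incoherent_kraus_gram_diagonal:
  assumes "strictly_incoherent_kraus K"
  shows "is_diagonal (adjoint K ** K)"
proof -
  have "is_diagonal (mat 1 :: qmat)"
    by (simp add: is_diagonal_iff mat_def)
  with assms show ?thesis
    unfolding strictly_incoherent_kraus_def incoherent_kraus_def by fastforce
qed

lemma strictly_incoherent_matrix_unit: "strictly_incoherent_kraus (matrix_unit i j s)"
  using exhaust_2[of i] exhaust_2[of j]
  by (elim disjE) (simp_all add: strictly_incoherent_kraus_def incoherent_kraus_iff_columns)

lemma matrix_unit_gram: "adjoint (matrix_unit i j s) ** matrix_unit i j s = matrix_unit j j (cnj s * s)"
  using exhaust_2[of i] exhaust_2[of j]
  by (elim disjE) (simp_all add: qmat_eq_iff matrix_mult_qmat_entry)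

lemma matrix_unit_sandwich:
  "matrix_unit i j s ** A ** adjoint (matrix_unit i j s) = matrix_unit i i (s * A$j$j * cnj s)"
  using exhaust_2[of i] exhaust_2[of j]
  by (elim disjE) (simp_all add: qmat_eq_iff matrix_mult_qmat_entry)

lemma psd_diagonal_eq_matrix_units:
  assumes "is_diagonal A" and "psd A"
  shows "A = matrix_unit 1 1 (of_real (Re (A$1$1))) + matrix_unit 2 2 (of_real (Re (A$2$2)))"
  using assms psd_diagonal_entry[OF assms(2), of 1] psd_diagonal_entry[OF assms(2), of 2]
  by (simp add: qmat_eq_iff is_diagonal_iff)

lemma matrix_unit_sqrt_gram:
  assumes "0 \<le> c"
  shows "adjoint (matrix_unit i j (of_real (sqrt c))) ** matrix_unit i j (of_real (sqrt c))
    = matrix_unit j j (of_real c)"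
  using assms by (simp add: matrix_unit_gram flip: of_real_mult)

lemma matrix_unit_sqrt_sandwich:
  assumes "0 \<le> c"
  shows "matrix_unit i j (of_real (sqrt c)) ** A ** adjoint (matrix_unit i j (of_real (sqrt c)))
    = matrix_unit i i (of_real c * A$j$j)"
proof -
  have "of_real (sqrt c) * A$j$j * cnj (of_real (sqrt c)) = of_real c * A$j$j"
    using assms by (simp add: mult.commute[of _ "A$j$j"] mult.assoc flip: of_real_mult)
  then show ?thesis
    unfolding matrix_unit_sandwich by (rule arg_cong)
qed

text \<open>Measure in the incoherent basis, where outcome \<open>j\<close> is weighted by \<open>m\<^sub>j\<close>, and
  prepare \<open>|0\<rangle>\<close> with probability \<open>l\<close> and \<open>|1\<rangle>\<close> otherwise.\<close>

definition measure_prepare :: "real \<Rightarrow> real \<Rightarrow> real \<Rightarrow> qmat list" where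
  "measure_prepare l m1 m2 =
     [matrix_unit 1 1 (of_real (sqrt (l * m1))), matrix_unit 1 2 (of_real (sqrt (l * m2))),
      matrix_unit 2 1 (of_real (sqrt ((1 - l) * m1))), matrix_unit 2 2 (of_real (sqrt ((1 - l) * m2)))]"

lemma strictly_incoherent_measure_prepare:
  "\<forall>K\<in>set (measure_prepare l m1 m2). strictly_incoherent_kraus K"
  by (simp add: measure_prepare_def strictly_incoherent_matrix_unit)

lemma gram_measure_prepare:
  assumes "0 \<le> l" "l \<le> 1" "0 \<le> m1" "0 \<le> m2"
  shows "(\<Sum>K\<leftarrow>measure_prepare l m1 m2. adjoint K ** K)
    = matrix_unit 1 1 (of_real m1) + matrix_unit 2 2 (of_real m2)"
proof -
  have "0 \<le> l * m1" "0 \<le> l * m2" "0 \<le> (1 - l) * m1" "0 \<le> (1 - l) * m2"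
    using assms by simp_all
  then have "(\<Sum>K\<leftarrow>measure_prepare l m1 m2. adjoint K ** K)
      = matrix_unit 1 1 (of_real (l * m1)) + (matrix_unit 2 2 (of_real (l * m2))
        + (matrix_unit 1 1 (of_real ((1 - l) * m1)) + (matrix_unit 2 2 (of_real ((1 - l) * m2)) + 0)))"
    by (simp only: measure_prepare_def matrix_unit_sqrt_gram list.map sum_list.Cons sum_list.Nil)
  also have "\<dots> = matrix_unit 1 1 (of_real m1) + matrix_unit 2 2 (of_real m2)"
    by (simp add: qmat_eq_iff flip: of_real_add) (simp add: algebra_simps)
  finally show ?thesis .
qed

lemma apply_kraus_measure_prepare:
  fixes \<rho> :: qmat
  assumes "0 \<le> l" "l \<le> 1" "0 \<le> m1" "0 \<le> m2"
  defines "p \<equiv> of_real m1 * \<rho>$1$1 + of_real m2 * \<rho>$2$2"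
  shows "apply_kraus (measure_prepare l m1 m2) \<rho>
    = matrix_unit 1 1 (of_real l * p) + matrix_unit 2 2 (of_real (1 - l) * p)"
proof -
  have "0 \<le> l * m1" "0 \<le> l * m2" "0 \<le> (1 - l) * m1" "0 \<le> (1 - l) * m2"
    using assms by simp_all
  then have "apply_kraus (measure_prepare l m1 m2) \<rho>
      = matrix_unit 1 1 (of_real (l * m1) * \<rho>$1$1) + (matrix_unit 1 1 (of_real (l * m2) * \<rho>$2$2)
        + (matrix_unit 2 2 (of_real ((1 - l) * m1) * \<rho>$1$1)
        + (matrix_unit 2 2 (of_real ((1 - l) * m2) * \<rho>$2$2) + 0)))"
    by (simp only: apply_kraus_def measure_prepare_def matrix_unit_sqrt_sandwich list.map
        sum_list.Cons sum_list.Nil)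
  also have "\<dots> = matrix_unit 1 1 (of_real l * p) + matrix_unit 2 2 (of_real (1 - l) * p)"
    by (simp add: qmat_eq_iff p_def algebra_simps)
  finally show ?thesis .
qed

lemma strictly_incoherent_kraus_for_diagonal_output:
  assumes M: "is_diagonal M" "psd M" and D: "is_diagonal D" "psd D"
    and trace: "qtrace D = qtrace (M ** \<rho>)"
  obtains Ns where "\<forall>K\<in>set Ns. strictly_incoherent_kraus K"
    and "(\<Sum>K\<leftarrow>Ns. adjoint K ** K) = M" and "apply_kraus Ns \<rho> = D"
proof -
  define m1 m2 d1 d2 where "m1 = Re (M$1$1)" and "m2 = Re (M$2$2)"
    and "d1 = Re (D$1$1)" and "d2 = Re (D$2$2)"
  have M_eq: "M = matrix_unit 1 1 (of_real m1) + matrix_unit 2 2 (of_real m2)"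
    unfolding m1_def m2_def using M by (rule psd_diagonal_eq_matrix_units)
  have D_eq: "D = matrix_unit 1 1 (of_real d1) + matrix_unit 2 2 (of_real d2)"
    unfolding d1_def d2_def using D by (rule psd_diagonal_eq_matrix_units)
  have nonneg: "0 \<le> m1" "0 \<le> m2" "0 \<le> d1" "0 \<le> d2"
    unfolding m1_def m2_def d1_def d2_def using psd_diagonal_entry M(2) D(2) by blast+
  have p: "of_real m1 * \<rho>$1$1 + of_real m2 * \<rho>$2$2 = of_real (d1 + d2)"
    using trace unfolding M_eq D_eq by (simp add: qtrace_def sum_2 matrix_mult_qmat_entry)
  \<comment> \<open>If \<open>d1 + d2 = 0\<close> then \<open>D = 0\<close> and any \<open>l\<close> works.\<close>
  define l where "l = (if d1 + d2 = 0 then 0 else d1 / (d1 + d2))"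
  have l: "0 \<le> l" "l \<le> 1"
    using nonneg by (simp_all add: l_def)
  have split1: "l * (d1 + d2) = d1"
    using nonneg by (auto simp: l_def)
  then have split2: "(1 - l) * (d1 + d2) = d2"
    by (simp add: left_diff_distrib)
  show ?thesis
  proof
    show "\<forall>K\<in>set (measure_prepare l m1 m2). strictly_incoherent_kraus K"
      by (rule strictly_incoherent_measure_prepare)
    show "(\<Sum>K\<leftarrow>measure_prepare l m1 m2. adjoint K ** K) = M"
      unfolding M_eq using l nonneg(1,2) by (rule gram_measure_prepare)
    show "apply_kraus (measure_prepare l m1 m2) \<rho> = D"
      unfolding apply_kraus_measure_prepare[OF l nonneg(1,2)] p D_eq
      by (simp only: split1 split2 flip: of_real_mult)
  qed
qed

lemma incoherent_op_realised_by_strictly_incoherent_op: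
  assumes "psd \<rho>" and "incoherent_op Ks"
  obtains Ks' where "strictly_incoherent_op Ks'" and "apply_kraus Ks' \<rho> = apply_kraus Ks \<rho>"
proof -
  define Gs where "Gs = filter strictly_incoherent_kraus Ks"
  define Bs where "Bs = filter (\<lambda>K. \<not> strictly_incoherent_kraus K) Ks"
  have complete: "(\<Sum>K\<leftarrow>Gs. adjoint K ** K) + (\<Sum>K\<leftarrow>Bs. adjoint K ** K) = mat 1"
    using assms(2) sum_list_map_filter_partition[of "\<lambda>K. adjoint K ** K" Ks]
    unfolding incoherent_op_iff kraus_complete_def Gs_def Bs_def by simp
  have outputs: "apply_kraus Ks \<rho> = apply_kraus Gs \<rho> + apply_kraus Bs \<rho>"
    unfolding apply_kraus_def Gs_def Bs_def by (rule sum_list_map_filter_partition)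
  have "is_diagonal (\<Sum>K\<leftarrow>Gs. adjoint K ** K)"
    by (rule is_diagonal_sum_list) (simp add: Gs_def strictly_incoherent_kraus_gram_diagonal)
  with complete have gram_Bs: "is_diagonal (\<Sum>K\<leftarrow>Bs. adjoint K ** K)"
    by (simp add: is_diagonal_iff qmat_eq_iff mat_def)
  have "is_diagonal (K ** \<rho> ** adjoint K)" if "K \<in> set Bs" for K
  proof -
    from that assms(2) have "incoherent_kraus K" "\<not> strictly_incoherent_kraus K"
      by (auto simp: Bs_def incoherent_op_iff)
    then show ?thesis
      by (metis not_strictly_incoherent_kraus_zero_row zero_row_sandwich_diagonal)
  qed
  then have output_Bs: "is_diagonal (apply_kraus Bs \<rho>)"
    unfolding apply_kraus_def by (rule is_diagonal_sum_list)
  obtain Ns where Ns: "\<forall>K\<in>set Ns. strictly_incoherent_kraus K"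
    "(\<Sum>K\<leftarrow>Ns. adjoint K ** K) = (\<Sum>K\<leftarrow>Bs. adjoint K ** K)" "apply_kraus Ns \<rho> = apply_kraus Bs \<rho>"
    using strictly_incoherent_kraus_for_diagonal_output[OF gram_Bs psd_gram output_Bs psd_apply_kraus[OF assms(1)]
        qtrace_apply_kraus] .
  show ?thesis
  proof
    show "strictly_incoherent_op (Gs @ Ns)"
      using complete Ns(1,2) unfolding strictly_incoherent_op_iff kraus_complete_def
      by (auto simp: Gs_def)
    show "apply_kraus (Gs @ Ns) \<rho> = apply_kraus Ks \<rho>"
      using outputs Ns(3) by (simp add: apply_kraus_def)
  qed
qed

theorem theorem1:
  fixes \<rho> :: qmat
  assumes "density_matrix \<rho>"
  shows "(\<forall>Ks. incoherent_op Ks \<longrightarrow>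
            (\<exists>Ks'. strictly_incoherent_op Ks' \<and> apply_kraus Ks' \<rho> = apply_kraus Ks \<rho>))
       \<and> {apply_kraus Ks \<rho> | Ks. incoherent_op Ks}
           = {apply_kraus Ks \<rho> | Ks. strictly_incoherent_op Ks}"
proof -
  have "psd \<rho>"
    using assms by (simp add: density_matrix_def)
  then have realised: "\<exists>Ks'. strictly_incoherent_op Ks' \<and> apply_kraus Ks' \<rho> = apply_kraus Ks \<rho>"
    if "incoherent_op Ks" for Ks
    using that incoherent_op_realised_by_strictly_incoherent_op by metis
  have "{apply_kraus Ks \<rho> | Ks. incoherent_op Ks} \<subseteq> {apply_kraus Ks \<rho> | Ks. strictly_incoherent_op Ks}"
  proof
    fix X
    assume "X \<in> {apply_kraus Ks \<rho> | Ks. incoherent_op Ks}"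
    then obtain Ks where "incoherent_op Ks" and "X = apply_kraus Ks \<rho>"
      by blast
    then obtain Ks' where "strictly_incoherent_op Ks'" and "apply_kraus Ks' \<rho> = X"
      using realised by blast
    then show "X \<in> {apply_kraus Ks \<rho> | Ks. strictly_incoherent_op Ks}"
      by blast
  qed
  moreover have "{apply_kraus Ks \<rho> | Ks. strictly_incoherent_op Ks} \<subseteq> {apply_kraus Ks \<rho> | Ks. incoherent_op Ks}"
    by (auto simp: strictly_incoherent_op_def)
  ultimately show ?thesis
    using realised by blast
qed

end
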